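(* Under the setting of Algorithm 2 with $f\in\mathcal{H}_k$ and invertible kernel matrices, let $X_n=(x_{(n-1)L+1},\dots,x_{nL})$ be the batch selected at round $n$ and $x^*\in\arg\max_{\mathcal{X}}f$. Then $$\frac1L\sum_{i=1}^L\big(f(x^* )-f(x_{(n-1)L+i})\big)\le2\|f\|_{\mathcal{H}_k}\sqrt{\frac{\operatorname{tr}(\operatorname{cov}_{n-1}(X_n,X_n))}{L}}.$$
   Context: Algorithm 2: $X_n$ maximizes over $X=(z_1,\dots,z_L)\in\mathcal{X}^L$ the quantity $\frac1L\sum_i m_{(n-1)L}(z_i)+\|f\|_{\mathcal{H}_k}\big(2\sqrt{\operatorname{tr}(\operatorname{cov}_{n-1}(X,X))/L}-\sqrt{\mathbf 1^T\operatorname{cov}_{n-1}(X,X)\mathbf 1/L^2}\big)$. Here $m_t(x)=\mathbf{k}_t(x)^T\mathbf{K}_t^{-1}\mathbf{f}_t$ with $\mathbf{k}_t(x)=[k(x,x_i)]_{i\le t}$, $\mathbf{K}_t=[k(x_i,x_j)]_{i,j\le t}$, $\mathbf{f}_t=[f(x_i)]_{i\le t}$; $\overline X_n=\{x_1,\dots,x_{nL}\}$; $\operatorname{cov}_n(X,X)=\mathbf{K}(X,X)-\mathbf{K}(\overline X_n,X)^T\mathbf{K}(\overline X_n,\overline X_n)^{-1}\mathbf{K}(\overline X_n,X)$, $\operatorname{cov}_0=\mathbf{K}(X,X)$. *)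

theory Defs
  imports "HOL-Analysis.Analysis" "Jordan_Normal_Form.Matrix"
begin

text \<open>An RKHS for a kernel k on 'a is represented by a real Hilbert space 'h together with
  the canonical feature map Phi, Phi x = k(x,.), such that k x y = <Phi x, Phi y> and the
  evaluation map h |-> (\<lambda>x. <h, Phi x>) identifying elements of 'h with functions is injective
  (i.e. 'h really is a space of functions on 'a).\<close>

definition is_rkhs :: "('a \<Rightarrow> 'a \<Rightarrow> real) \<Rightarrow> ('a \<Rightarrow> 'h::{real_inner,complete_space}) \<Rightarrow> bool" where
  "is_rkhs k Phi \<longleftrightarrow> (\<forall>x y. k x y = inner (Phi x) (Phi y))
      \<and> inj (\<lambda>h. (\<lambda>x. inner h (Phi x)))"

definition rkhs_fun :: "('a \<Rightarrow> 'h::real_inner) \<Rightarrow> 'h \<Rightarrow> ('a \<Rightarrow> real)" where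
  "rkhs_fun Phi h = (\<lambda>x. inner h (Phi x))"

definition in_rkhs :: "('a \<Rightarrow> 'h::real_inner) \<Rightarrow> ('a \<Rightarrow> real) \<Rightarrow> bool" where
  "in_rkhs Phi f \<longleftrightarrow> (\<exists>h. f = rkhs_fun Phi h)"

definition rkhs_norm :: "('a \<Rightarrow> 'h::real_inner) \<Rightarrow> ('a \<Rightarrow> real) \<Rightarrow> real" where
  "rkhs_norm Phi f = norm (THE h. f = rkhs_fun Phi h)"

definition kmat :: "('a \<Rightarrow> 'a \<Rightarrow> real) \<Rightarrow> 'a list \<Rightarrow> 'a list \<Rightarrow> real mat" where
  "kmat k xs ys = mat (length xs) (length ys) (\<lambda>(i,j). k (xs ! i) (ys ! j))"

definition mat_inv :: "real mat \<Rightarrow> real mat" where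
  "mat_inv A = (SOME B. B \<in> carrier_mat (dim_row A) (dim_row A) \<and> inverts_mat A B \<and> inverts_mat B A)"

definition mat_trace :: "real mat \<Rightarrow> real" where
  "mat_trace A = (\<Sum>i<dim_row A. A $$ (i,i))"

definition mat_entry_sum :: "real mat \<Rightarrow> real" where
  "mat_entry_sum A = (\<Sum>i<dim_row A. \<Sum>j<dim_col A. A $$ (i,j))"

text \<open>The queried points are x 1, x 2, ... (1-based); Xbar t = [x 1, ..., x t].\<close>
definition Xbar :: "(nat \<Rightarrow> 'a) \<Rightarrow> nat \<Rightarrow> 'a list" where
  "Xbar x t = map x [1..<t+1]"

definition post_mean :: "('a \<Rightarrow> 'a \<Rightarrow> real) \<Rightarrow> ('a \<Rightarrow> real) \<Rightarrow> (nat \<Rightarrow> 'a) \<Rightarrow> nat \<Rightarrow> 'a \<Rightarrow> real" where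
  "post_mean k f x t z =
     vec t (\<lambda>i. k z (Xbar x t ! i)) \<bullet> (mat_inv (kmat k (Xbar x t) (Xbar x t)) *\<^sub>v vec t (\<lambda>i. f (Xbar x t ! i)))"

text \<open>posterior covariance cov_n(X,X) after n batches of size L (n = 0 gives K(X,X))\<close>
definition post_cov :: "('a \<Rightarrow> 'a \<Rightarrow> real) \<Rightarrow> (nat \<Rightarrow> 'a) \<Rightarrow> nat \<Rightarrow> nat \<Rightarrow> 'a list \<Rightarrow> real mat" where
  "post_cov k x L n X =
     kmat k X X - transpose_mat (kmat k (Xbar x (n*L)) X)
        * mat_inv (kmat k (Xbar x (n*L)) (Xbar x (n*L))) * kmat k (Xbar x (n*L)) X"

definition acq :: "('a \<Rightarrow> 'a \<Rightarrow> real) \<Rightarrow> ('a \<Rightarrow> real) \<Rightarrow> real \<Rightarrow> (nat \<Rightarrow> 'a) \<Rightarrow> nat \<Rightarrow> nat \<Rightarrow> 'a list \<Rightarrow> real" where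
  "acq k f fnorm x L n X =
     (1 / real L) * (\<Sum>i<L. post_mean k f x ((n-1)*L) (X ! i))
     + fnorm * (2 * sqrt (mat_trace (post_cov k x L (n-1) X) / real L)
                - sqrt (mat_entry_sum (post_cov k x L (n-1) X) / (real L)^2))"

definition batch :: "(nat \<Rightarrow> 'a) \<Rightarrow> nat \<Rightarrow> nat \<Rightarrow> 'a list" where
  "batch x L n = map x [(n-1)*L+1..<n*L+1]"

end

theory Submission
  imports Defs
begin

(* Posterior quantities have a feature-space reading. Let r z be Phi z minus its orthogonal
   projection onto the span of the features of the points queried so far. Then cov_{n-1}(X,X)
   is the Gram matrix of the r (X ! i), and m(z) = f z - <h, r z> when f = <h, Phi ->.
   Writing R for the sum of the r (X ! i), the acquisition value of a batch X of size L is
   therefore  mean f(X) - <h,R>/L + |h| (2 sqrt(tr cov/L) - |R|/L),  which Cauchy-Schwarz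
   bounds by  mean f(X) + 2 |h| sqrt(tr cov/L).  For the batch of L copies of xstar it is
   m(xstar) + |h| |r xstar| >= f xstar, again by Cauchy-Schwarz. The selected batch has at
   least the acquisition value of that constant batch, which gives the bound. *)

lemma mat_inv_left_inverse:
  fixes K :: "real mat"
  assumes "invertible_mat K" and K: "K \<in> carrier_mat t t"
  shows "mat_inv K \<in> carrier_mat t t" and "mat_inv K * K = 1\<^sub>m t"
proof -
  obtain B where KB: "K * B = 1\<^sub>m (dim_row K)" and BK: "B * K = 1\<^sub>m (dim_row B)"
    using assms(1) unfolding invertible_mat_def inverts_mat_def by blast
  have "dim_row B = t" "dim_col B = t"
    using arg_cong[OF BK, of dim_col] arg_cong[OF KB, of dim_col] K by auto
  then have "B \<in> carrier_mat (dim_row K) (dim_row K) \<and> inverts_mat K B \<and> inverts_mat B K"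
    using K KB BK unfolding inverts_mat_def by auto
  then have "mat_inv K \<in> carrier_mat (dim_row K) (dim_row K) \<and> inverts_mat K (mat_inv K)
      \<and> inverts_mat (mat_inv K) K"
    unfolding mat_inv_def by (rule someI)
  then show "mat_inv K \<in> carrier_mat t t" and "mat_inv K * K = 1\<^sub>m t"
    using K unfolding inverts_mat_def by auto
qed

lemma mat_trace_gram:
  fixes v :: "nat \<Rightarrow> 'h::real_inner"
  shows "mat_trace (mat n n (\<lambda>(i, j). inner (v i) (v j))) = (\<Sum>i<n. (norm (v i))\<^sup>2)"
  by (simp add: mat_trace_def power2_norm_eq_inner)

lemma mat_entry_sum_gram:
  fixes v :: "nat \<Rightarrow> 'h::real_inner"
  shows "mat_entry_sum (mat n n (\<lambda>(i, j). inner (v i) (v j))) = (norm (\<Sum>i<n. v i))\<^sup>2"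
proof -
  have "mat_entry_sum (mat n n (\<lambda>(i, j). inner (v i) (v j))) = (\<Sum>i<n. \<Sum>j<n. inner (v i) (v j))"
    by (simp add: mat_entry_sum_def)
  also have "\<dots> = inner (\<Sum>i<n. v i) (\<Sum>j<n. v j)"
    by (simp add: inner_sum_left inner_sum_right) (rule sum.swap)
  finally show ?thesis
    by (simp add: power2_norm_eq_inner)
qed

lemma length_Xbar [simp]: "length (Xbar x t) = t"
  by (simp add: Xbar_def)

text \<open>The coefficients of the projection are the entries of K(ps,ps)^-1 k_ps(z), so the
  projection is the orthogonal one onto the span of the Phi (ps ! b) once K(ps,ps) is invertible.\<close>

definition feature_projection :: "('a \<Rightarrow> 'a \<Rightarrow> real) \<Rightarrow> ('a \<Rightarrow> 'h::real_inner) \<Rightarrow> 'a list \<Rightarrow> 'a \<Rightarrow> 'h" where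
  "feature_projection k Phi ps z =
     (\<Sum>b<length ps. (\<Sum>a<length ps. mat_inv (kmat k ps ps) $$ (a, b) * k (ps ! a) z) *\<^sub>R Phi (ps ! b))"

definition feature_residual :: "('a \<Rightarrow> 'a \<Rightarrow> real) \<Rightarrow> ('a \<Rightarrow> 'h::real_inner) \<Rightarrow> 'a list \<Rightarrow> 'a \<Rightarrow> 'h" where
  "feature_residual k Phi ps z = Phi z - feature_projection k Phi ps z"

lemma mat_inv_kmat_mult_kmat_entry:
  assumes "invertible_mat (kmat k ps ps)" and "a < length ps" and "c < length ps"
  shows "(\<Sum>b<length ps. mat_inv (kmat k ps ps) $$ (a, b) * k (ps ! b) (ps ! c)) = of_bool (a = c)"
proof -
  have K: "kmat k ps ps \<in> carrier_mat (length ps) (length ps)"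
    by (simp add: kmat_def)
  note M = mat_inv_left_inverse[OF assms(1) K]
  have "(\<Sum>b<length ps. mat_inv (kmat k ps ps) $$ (a, b) * k (ps ! b) (ps ! c))
      = (mat_inv (kmat k ps ps) * kmat k ps ps) $$ (a, c)"
    using M(1) assms(2,3) by (simp add: kmat_def scalar_prod_def lessThan_atLeast0)
  also have "\<dots> = of_bool (a = c)"
    using M(2) assms(2,3) by simp
  finally show ?thesis .
qed

lemma index_kmat_schur_complement:
  assumes M: "mat_inv (kmat k ps ps) \<in> carrier_mat (length ps) (length ps)"
    and i: "i < length X" and j: "j < length X"
  shows "(kmat k X X - transpose_mat (kmat k ps X) * mat_inv (kmat k ps ps) * kmat k ps X) $$ (i, j)
     = k (X ! i) (X ! j) - (\<Sum>a<length ps. \<Sum>b<length ps.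
         k (ps ! a) (X ! i) * mat_inv (kmat k ps ps) $$ (a, b) * k (ps ! b) (X ! j))"
  using M i j unfolding kmat_def
  by (simp add: scalar_prod_def lessThan_atLeast0 sum_distrib_left)
    (subst sum.swap, simp add: sum_distrib_left mult_ac)

context
  fixes k :: "'a \<Rightarrow> 'a \<Rightarrow> real" and Phi :: "'a \<Rightarrow> 'h::real_inner"
  assumes kernel_inner: "\<And>u v. k u v = inner (Phi u) (Phi v)"
begin

lemma kernel_sym: "k u v = k v u"
  by (simp add: kernel_inner inner_commute)

lemma feature_residual_orthogonal:
  assumes inv: "invertible_mat (kmat k ps ps)" and c: "c < length ps"
  shows "inner (Phi (ps ! c)) (feature_residual k Phi ps w) = 0"
proof -
  let ?t = "length ps" and ?M = "mat_inv (kmat k ps ps)"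
  have "inner (Phi (ps ! c)) (feature_projection k Phi ps w)
      = (\<Sum>b<?t. \<Sum>a<?t. k (ps ! a) w * (?M $$ (a, b) * k (ps ! b) (ps ! c)))"
    unfolding feature_projection_def
    by (simp add: inner_sum_right sum_distrib_left sum_distrib_right kernel_inner[symmetric]
        kernel_sym[of "ps ! c"] mult_ac)
  also have "\<dots> = (\<Sum>a<?t. k (ps ! a) w * (\<Sum>b<?t. ?M $$ (a, b) * k (ps ! b) (ps ! c)))"
    by (subst sum.swap) (simp add: sum_distrib_left)
  also have "\<dots> = (\<Sum>a<?t. k (ps ! a) w * of_bool (a = c))"
    using mat_inv_kmat_mult_kmat_entry[OF inv _ c] by simp
  also have "\<dots> = inner (Phi (ps ! c)) (Phi w)"
    using c by (simp add: kernel_inner)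
  finally show ?thesis
    by (simp add: feature_residual_def inner_diff_right)
qed

lemma inner_feature_residual_right:
  "inner h (feature_residual k Phi ps z)
     = inner h (Phi z) - (\<Sum>a<length ps. \<Sum>b<length ps.
          k (ps ! a) z * mat_inv (kmat k ps ps) $$ (a, b) * inner h (Phi (ps ! b)))"
proof -
  let ?t = "length ps" and ?M = "mat_inv (kmat k ps ps)"
  have "inner h (feature_projection k Phi ps z)
      = (\<Sum>b<?t. \<Sum>a<?t. k (ps ! a) z * ?M $$ (a, b) * inner h (Phi (ps ! b)))"
    unfolding feature_projection_def
    by (simp add: inner_sum_right sum_distrib_left sum_distrib_right mult_ac)
  also have "\<dots> = (\<Sum>a<?t. \<Sum>b<?t. k (ps ! a) z * ?M $$ (a, b) * inner h (Phi (ps ! b)))"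
    by (rule sum.swap)
  finally show ?thesis
    by (simp add: feature_residual_def inner_diff_right)
qed

lemma inner_feature_residual:
  assumes "invertible_mat (kmat k ps ps)"
  shows "inner (feature_residual k Phi ps z) (feature_residual k Phi ps w)
     = k z w - (\<Sum>a<length ps. \<Sum>b<length ps.
          k (ps ! a) z * mat_inv (kmat k ps ps) $$ (a, b) * k (ps ! b) w)"
proof -
  have "inner (feature_residual k Phi ps z) (feature_projection k Phi ps w) = 0"
    unfolding feature_projection_def
    using feature_residual_orthogonal[OF assms] by (simp add: inner_sum_right inner_commute)
  then have "inner (feature_residual k Phi ps z) (feature_residual k Phi ps w)
      = inner (Phi w) (feature_residual k Phi ps z)"
    by (simp add: feature_residual_def[of _ _ _ w] inner_diff_right inner_commute)
  then show ?thesis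
    by (simp add: inner_feature_residual_right kernel_inner[symmetric] kernel_sym[of w])
qed

lemma kmat_schur_complement_eq_gram:
  assumes inv: "invertible_mat (kmat k ps ps)"
  shows "kmat k X X - transpose_mat (kmat k ps X) * mat_inv (kmat k ps ps) * kmat k ps X
     = mat (length X) (length X)
         (\<lambda>(i, j). inner (feature_residual k Phi ps (X ! i)) (feature_residual k Phi ps (X ! j)))"
    (is "?C = ?G")
proof (rule eq_matI)
  have M: "mat_inv (kmat k ps ps) \<in> carrier_mat (length ps) (length ps)"
    by (rule mat_inv_left_inverse(1)[OF inv]) (simp add: kmat_def)
  fix i j assume "i < dim_row ?G" "j < dim_col ?G"
  then have "?C $$ (i, j) = k (X ! i) (X ! j) - (\<Sum>a<length ps. \<Sum>b<length ps.
      k (ps ! a) (X ! i) * mat_inv (kmat k ps ps) $$ (a, b) * k (ps ! b) (X ! j))"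
    using M by (intro index_kmat_schur_complement) simp_all
  then show "?C $$ (i, j) = ?G $$ (i, j)"
    using \<open>i < dim_row ?G\<close> \<open>j < dim_col ?G\<close> by (simp add: inner_feature_residual[OF inv])
qed (simp_all add: kmat_def)

lemma post_mean_rkhs_fun:
  assumes inv: "invertible_mat (kmat k (Xbar x t) (Xbar x t))"
  shows "post_mean k (rkhs_fun Phi h) x t z
     = rkhs_fun Phi h z - inner h (feature_residual k Phi (Xbar x t) z)"
proof -
  let ?ps = "Xbar x t" and ?M = "mat_inv (kmat k (Xbar x t) (Xbar x t))"
  have "?M \<in> carrier_mat t t"
    by (rule mat_inv_left_inverse(1)[OF inv]) (simp add: kmat_def)
  then have "post_mean k (rkhs_fun Phi h) x t z
      = (\<Sum>a<t. \<Sum>b<t. k z (?ps ! a) * ?M $$ (a, b) * rkhs_fun Phi h (?ps ! b))"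
    unfolding post_mean_def by (simp add: scalar_prod_def lessThan_atLeast0 sum_distrib_left mult_ac)
  also have "\<dots> = (\<Sum>a<t. \<Sum>b<t. k (?ps ! a) z * ?M $$ (a, b) * inner h (Phi (?ps ! b)))"
    by (intro sum.cong refl) (simp add: rkhs_fun_def kernel_sym[of z])
  also have "\<dots> = rkhs_fun Phi h z - inner h (feature_residual k Phi ?ps z)"
    unfolding inner_feature_residual_right rkhs_fun_def by simp
  finally show ?thesis .
qed

lemma mat_trace_post_cov:
  assumes "invertible_mat (kmat k (Xbar x (n * L)) (Xbar x (n * L)))"
  shows "mat_trace (post_cov k x L n X)
     = (\<Sum>i<length X. (norm (feature_residual k Phi (Xbar x (n * L)) (X ! i)))\<^sup>2)"
  unfolding post_cov_def kmat_schur_complement_eq_gram[OF assms] by (rule mat_trace_gram)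

lemma mat_entry_sum_post_cov:
  assumes "invertible_mat (kmat k (Xbar x (n * L)) (Xbar x (n * L)))"
  shows "mat_entry_sum (post_cov k x L n X)
     = (norm (\<Sum>i<length X. feature_residual k Phi (Xbar x (n * L)) (X ! i)))\<^sup>2"
  unfolding post_cov_def kmat_schur_complement_eq_gram[OF assms] by (rule mat_entry_sum_gram)

lemma rkhs_fun_le_acq_replicate:
  assumes inv: "invertible_mat (kmat k (Xbar x ((m - 1) * L)) (Xbar x ((m - 1) * L)))"
    and L: "0 < L"
  shows "rkhs_fun Phi h z \<le> acq k (rkhs_fun Phi h) (norm h) x L m (replicate L z)"
proof -
  let ?r = "feature_residual k Phi (Xbar x ((m - 1) * L)) z"
  have "sqrt (mat_trace (post_cov k x L (m - 1) (replicate L z)) / real L) = norm ?r"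
    using L unfolding mat_trace_post_cov[OF inv] by simp
  moreover have "sqrt (mat_entry_sum (post_cov k x L (m - 1) (replicate L z)) / (real L)\<^sup>2) = norm ?r"
    using L unfolding mat_entry_sum_post_cov[OF inv] by (simp add: sum_constant_scaleR power_mult_distrib)
  ultimately have "acq k (rkhs_fun Phi h) (norm h) x L m (replicate L z)
      = rkhs_fun Phi h z - inner h ?r + norm h * norm ?r"
    using L unfolding acq_def post_mean_rkhs_fun[OF inv] by simp
  then show ?thesis
    using norm_cauchy_schwarz[of h ?r] by linarith
qed

lemma acq_le_mean_plus_width:
  assumes inv: "invertible_mat (kmat k (Xbar x ((m - 1) * L)) (Xbar x ((m - 1) * L)))"
    and X: "length X = L" and L: "0 < L"
  shows "acq k (rkhs_fun Phi h) (norm h) x L m X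
     \<le> (\<Sum>i<L. rkhs_fun Phi h (X ! i)) / real L
        + 2 * norm h * sqrt (mat_trace (post_cov k x L (m - 1) X) / real L)"
proof -
  define R where "R = (\<Sum>i<L. feature_residual k Phi (Xbar x ((m - 1) * L)) (X ! i))"
  have mean: "(\<Sum>i<L. post_mean k (rkhs_fun Phi h) x ((m - 1) * L) (X ! i))
      = (\<Sum>i<L. rkhs_fun Phi h (X ! i)) - inner h R"
    unfolding post_mean_rkhs_fun[OF inv] R_def by (simp add: sum_subtractf inner_sum_right)
  have width: "sqrt (mat_entry_sum (post_cov k x L (m - 1) X) / (real L)\<^sup>2) = norm R / real L"
    using L unfolding mat_entry_sum_post_cov[OF inv] X R_def by (simp add: real_sqrt_divide)
  have expand: "acq k (rkhs_fun Phi h) (norm h) x L m X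
      = (\<Sum>i<L. rkhs_fun Phi h (X ! i)) / real L - inner h R / real L - norm h * norm R / real L
        + 2 * norm h * sqrt (mat_trace (post_cov k x L (m - 1) X) / real L)"
    unfolding acq_def mean width by (simp add: algebra_simps diff_divide_distrib)
  have "- inner h R \<le> norm h * norm R"
    using norm_cauchy_schwarz[of h "- R"] by simp
  then have "- (inner h R / real L) \<le> norm h * norm R / real L"
    using divide_right_mono[of "- inner h R" "norm h * norm R" "real L"] by simp
  with expand show ?thesis
    by linarith
qed

end

lemma rkhs_norm_rkhs_fun:
  assumes "is_rkhs k Phi"
  shows "rkhs_norm Phi (rkhs_fun Phi h) = norm h"
proof -
  have "(THE h'. rkhs_fun Phi h = rkhs_fun Phi h') = h"
    using assms by (intro the_equality) (auto simp: is_rkhs_def rkhs_fun_def inj_def)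
  then show ?thesis
    by (simp add: rkhs_norm_def)
qed

lemma length_batch: "1 \<le> n \<Longrightarrow> length (batch x L n) = L"
  by (cases n) (simp_all add: batch_def)

lemma nth_batch: "1 \<le> n \<Longrightarrow> i < L \<Longrightarrow> batch x L n ! i = x ((n - 1) * L + Suc i)"
  by (cases n) (simp_all add: batch_def nth_upt del: upt_Suc)

theorem mainTheorem12:
  fixes k :: "'a \<Rightarrow> 'a \<Rightarrow> real"
    and Phi :: "'a \<Rightarrow> 'h::{real_inner,complete_space}"
    and f :: "'a \<Rightarrow> real"
    and D :: "'a set"
    and x :: "nat \<Rightarrow> 'a"
    and L n :: nat
    and xstar :: 'a
  assumes rkhs: "is_rkhs k Phi"
    and f_in: "in_rkhs Phi f"
    and L_pos: "L \<ge> 1"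
    and n_pos: "n \<ge> 1"
    and invertible: "\<And>m. 1 \<le> m \<Longrightarrow> m \<le> n \<Longrightarrow>
                       invertible_mat (kmat k (Xbar x ((m-1)*L)) (Xbar x ((m-1)*L)))"
    and in_dom: "\<And>m. 1 \<le> m \<Longrightarrow> m \<le> n \<Longrightarrow> set (batch x L m) \<subseteq> D"
    and alg2: "\<And>m Z. 1 \<le> m \<Longrightarrow> m \<le> n \<Longrightarrow> length Z = L \<Longrightarrow> set Z \<subseteq> D \<Longrightarrow>
                 acq k f (rkhs_norm Phi f) x L m Z \<le> acq k f (rkhs_norm Phi f) x L m (batch x L m)"
    and xstar_mem: "xstar \<in> D"
    and xstar_max: "\<And>z. z \<in> D \<Longrightarrow> f z \<le> f xstar"
  shows "(1 / real L) * (\<Sum>i=1..L. f xstar - f (x ((n-1)*L + i)))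
           \<le> 2 * rkhs_norm Phi f * sqrt (mat_trace (post_cov k x L (n-1) (batch x L n)) / real L)"
proof -
  obtain h where f: "f = rkhs_fun Phi h"
    using f_in unfolding in_rkhs_def by blast
  have kernel: "\<And>u v. k u v = inner (Phi u) (Phi v)" and fnorm: "rkhs_norm Phi f = norm h"
    using rkhs rkhs_norm_rkhs_fun[OF rkhs] unfolding f is_rkhs_def by auto
  have inv: "invertible_mat (kmat k (Xbar x ((n - 1) * L)) (Xbar x ((n - 1) * L)))"
    using invertible n_pos by simp
  have L: "0 < L"
    using L_pos by simp
  let ?X = "batch x L n" and ?acq = "acq k f (norm h) x L n"
  have "f xstar \<le> ?acq (replicate L xstar)"
    unfolding f by (rule rkhs_fun_le_acq_replicate[OF kernel inv L])
  also have "\<dots> \<le> ?acq ?X"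
    using alg2[of n "replicate L xstar"] n_pos xstar_mem L by (simp add: fnorm)
  also have "\<dots> \<le> (\<Sum>i<L. f (?X ! i)) / real L
      + 2 * norm h * sqrt (mat_trace (post_cov k x L (n - 1) ?X) / real L)"
    unfolding f by (rule acq_le_mean_plus_width[OF kernel inv length_batch[OF n_pos] L])
  finally show ?thesis
    using L n_pos by (simp add: fnorm sum.atLeast1_atMost_eq nth_batch sum_subtractf field_simps)
qed

end
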